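(* Suppose that $(M,d,\mu)$ satisfies $\mathrm{VD}(d_2)$ and $\mathrm{Diff}(F)$, where $F:(0,\infty)\to(0,\infty)$ is strictly increasing and satisfies $L(\gamma_1,c_F^{-1})$ and $U(\gamma_2,c_F)$ with $1<\gamma_1\le\gamma_2$, and let $q(t,x,y)$ be the transition density of the diffusion in $\mathrm{Diff}(F)$. Let $\psi$ be non-decreasing satisfying $L(\beta_1,C_L)$, $U(\beta_2,C_U)$ and $\int_0^1\frac{dF(s)}{\psi(s)}<\infty$. Define $$\mathcal J_\psi(x,y):=\int_0^\infty q(t,x,y)\frac{1}{t\,\psi(F^{-1}(t))}\,dt .$$ Then there is $\bar C>1$ such that for all $x,y\in M$ with $x\ne y$, $$\frac{\bar C^{-1}}{V(x,d(x,y))\psi(d(x,y))}\le\mathcal J_\psi(x,y)\le\frac{\bar C}{V(x,d(x,y))\psi(d(x,y))}.$$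
   Context: $(M,d)$ is a locally compact separable metric space with relatively compact balls, $\mu$ a positive Radon measure with full support, $\mu(M)=\infty$; $B(x,r)=\{y:d(x,y)<r\}$, $V(x,r)=\mu(B(x,r))$. $\mathrm{VD}(d_2)$: there is $C_\mu\ge1$ with $V(x,R)/V(x,r)\le C_\mu(R/r)^{d_2}$ for all $x$, $0<r\le R$. $g$ satisfies $L(\beta,c)$ (resp. $U(\beta,C)$) if $g(R)/g(r)\ge c(R/r)^\beta$ (resp. $\le C(R/r)^\beta$) for all $0<r\le R$; $0<\beta_1\le\beta_2$. $F_1(r,t)=\sup_{s>0}[r/s-t/F(s)]$. $\mathrm{Diff}(F)$: there is a conservative $\mu$-symmetric diffusion process $Z$ on $M$ with transition density $q(t,x,y)$ w.r.t. $\mu$ and constants $c\ge1$, $a_0>0$ such that $\frac{c^{-1}}{V(x,F^{-1}(t))}\mathbf 1_{\{F(d(x,y))\le t\}}\le q(t,x,y)\le\frac{c}{V(x,F^{-1}(t))}\exp(-a_0F_1(d(x,y),t))$ for all $t>0$, $x,y\in M$. ($\mathcal J_\psi$ is the jump kernel of the subordinate process $Z_{S_t}$, with $S$ an independent subordinator of Laplace exponent $\lambda\mapsto\int_0^\infty(1-e^{-\lambda t})\frac{dt}{t\psi(F^{-1}(t))}$.) *)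

theory Defs
  imports "HOL-Analysis.Analysis"
begin

definition V :: "'a::metric_space measure \<Rightarrow> 'a \<Rightarrow> real \<Rightarrow> real" where
  "V \<mu> x r = measure \<mu> (ball x r)"

definition VD :: "'a::metric_space measure \<Rightarrow> real \<Rightarrow> bool" where
  "VD \<mu> d2 \<longleftrightarrow> (\<exists>C\<ge>1. \<forall>x r R. 0 < r \<longrightarrow> r \<le> R \<longrightarrow>
       V \<mu> x R / V \<mu> x r \<le> C * (R / r) powr d2)"

definition L_scale :: "real \<Rightarrow> real \<Rightarrow> (real \<Rightarrow> real) \<Rightarrow> bool" where
  "L_scale \<beta> c g \<longleftrightarrow> (\<forall>r R. 0 < r \<longrightarrow> r \<le> R \<longrightarrow> g R / g r \<ge> c * (R / r) powr \<beta>)"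

definition U_scale :: "real \<Rightarrow> real \<Rightarrow> (real \<Rightarrow> real) \<Rightarrow> bool" where
  "U_scale \<beta> C g \<longleftrightarrow> (\<forall>r R. 0 < r \<longrightarrow> r \<le> R \<longrightarrow> g R / g r \<le> C * (R / r) powr \<beta>)"

text \<open>Inverse of the strictly increasing F (generalized inverse; equals the
  usual inverse when F is a bijection of (0,infinity)).\<close>
definition Finv :: "(real \<Rightarrow> real) \<Rightarrow> real \<Rightarrow> real" where
  "Finv F t = Sup {s. 0 < s \<and> F s \<le> t}"

definition F1 :: "(real \<Rightarrow> real) \<Rightarrow> real \<Rightarrow> real \<Rightarrow> real" where
  "F1 F r t = (SUP s\<in>{0<..}. r / s - t / F s)"

text \<open>Diff(F): q is the transition density (w.r.t. mu) of a conservative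
  mu-symmetric Markov semigroup satisfying the two-sided bounds.
  (Path continuity of the process is not expressible.)\<close>
definition Diff :: "'a::metric_space measure \<Rightarrow> (real \<Rightarrow> real) \<Rightarrow>
    (real \<Rightarrow> 'a \<Rightarrow> 'a \<Rightarrow> real) \<Rightarrow> bool" where
  "Diff \<mu> F q \<longleftrightarrow>
     (\<forall>t x y. 0 < t \<longrightarrow> 0 \<le> q t x y) \<and>
     (\<forall>t x y. 0 < t \<longrightarrow> q t x y = q t y x) \<and>
     (\<forall>x y. (\<lambda>t. q t x y) \<in> borel_measurable borel) \<and>
     (\<forall>t x. 0 < t \<longrightarrow> (\<lambda>y. q t x y) \<in> borel_measurable \<mu>) \<and>
     (\<forall>t x. 0 < t \<longrightarrow> (\<integral>\<^sup>+ y. ennreal (q t x y) \<partial>\<mu>) = 1) \<and>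
     (\<forall>t s x y. 0 < t \<longrightarrow> 0 < s \<longrightarrow>
        ennreal (q (t + s) x y) = (\<integral>\<^sup>+ z. ennreal (q t x z * q s z y) \<partial>\<mu>)) \<and>
     (\<exists>c\<ge>1. \<exists>a0>0. \<forall>t x y. 0 < t \<longrightarrow>
        (if F (dist x y) \<le> t then 1 else 0) / (c * V \<mu> x (Finv F t)) \<le> q t x y \<and>
        q t x y \<le> c / V \<mu> x (Finv F t) * exp (- a0 * F1 F (dist x y) t))"

text \<open>Right-continuous regularisation of F (extended by 0 on (-infinity,0]),
  whose Lebesgue--Stieltjes measure is the measure dF.\<close>
definition F_rc :: "(real \<Rightarrow> real) \<Rightarrow> real \<Rightarrow> real" where
  "F_rc F s = (if s \<le> 0 then 0 else Inf (F ` {s<..}))"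

definition stieltjes_int01 :: "(real \<Rightarrow> real) \<Rightarrow> (real \<Rightarrow> real) \<Rightarrow> ennreal" where
  "stieltjes_int01 F \<psi> = (\<integral>\<^sup>+ s\<in>{0<..1}. ennreal (1 / \<psi> s) \<partial>(interval_measure (F_rc F)))"

definition Jpsi :: "(real \<Rightarrow> 'a \<Rightarrow> 'a \<Rightarrow> real) \<Rightarrow> (real \<Rightarrow> real) \<Rightarrow> (real \<Rightarrow> real)
    \<Rightarrow> 'a \<Rightarrow> 'a \<Rightarrow> ennreal" where
  "Jpsi q F \<psi> x y = (\<integral>\<^sup>+ t\<in>{0<..}. ennreal (q t x y / (t * \<psi> (Finv F t))) \<partial>lborel)"

end

(* Write d = d(x,y). The integrand of J_psi lives essentially at times t of order F(d).
   On the window [F d, 2 F d] the near-diagonal lower heat kernel bound applies and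
   F^{-1}(t) is comparable to d, so volume doubling and the scaling of psi give the lower bound.
   For t <= F d the off-diagonal factor exp(-a0 F_1(d,t)) decays faster than any power of
   F(d)/t, which absorbs the polynomial loss from comparing V(x,F^{-1}(t)) psi(F^{-1}(t)) with
   V(x,d) psi(d); for t >= F d the lower scaling of psi makes the integrand decay like
   t^(-1-beta1/gamma2), which is integrable at infinity. *)

theory Submission imports Defs begin

lemma L_scaleD:
  assumes "L_scale \<beta> c g" "0 < g r" "0 < r" "r \<le> R"
  shows "c * (R / r) powr \<beta> * g r \<le> g R"
  using assms unfolding L_scale_def by (auto simp: pos_le_divide_eq)

lemma U_scaleD:
  assumes "U_scale \<beta> C g" "0 < g r" "0 < r" "r \<le> R"
  shows "g R \<le> C * (R / r) powr \<beta> * g r"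
  using assms unfolding U_scale_def by (auto simp: pos_divide_le_eq)

lemma U_scale_const_ge_1:
  assumes "U_scale \<beta> C g" "0 < g 1"
  shows "1 \<le> C"
  using U_scaleD[OF assms, of 1] assms(2) by simp

lemma powr_le_of_le_root:
  fixes x y g :: real
  assumes "0 < g" "0 \<le> x" "0 \<le> y" "x \<le> y powr (1/g)"
  shows "x powr g \<le> y"
proof -
  have "x powr g \<le> (y powr (1/g)) powr g" using assms by (intro powr_mono2) auto
  also have "\<dots> = y" using assms by (simp add: powr_powr)
  finally show ?thesis .
qed

lemma le_powr_of_root_le:
  fixes x y g :: real
  assumes "0 < g" "0 \<le> x" "0 \<le> y" "y powr (1/g) \<le> x"
  shows "y \<le> x powr g"
proof -
  have "y = (y powr (1/g)) powr g" using assms by (simp add: powr_powr)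
  also have "\<dots> \<le> x powr g" using assms by (intro powr_mono2) auto
  finally show ?thesis .
qed

lemma powr_le_const_mul_exp_powr:
  fixes b \<theta> p :: real
  assumes "0 < b" "0 < \<theta>"
  shows "\<exists>K\<ge>1. \<forall>w\<ge>1. w powr p \<le> K * exp (b * w powr \<theta>)"
proof -
  define n :: nat where "n = nat \<lceil>p / \<theta>\<rceil> + 1"
  have n: "p / \<theta> \<le> real n" "0 < n" unfolding n_def
    using real_nat_ceiling_ge[of "p/\<theta>"] by auto
  define K where "K = max 1 ((real n / b) ^ n)"
  have "w powr p \<le> K * exp (b * w powr \<theta>)" if w: "w \<ge> 1" for w
  proof -
    have "p \<le> \<theta> * real n" using n assms by (simp add: divide_le_eq mult.commute)
    then have "w powr p \<le> w powr (\<theta> * real n)" using w by (intro powr_mono) auto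
    also have "\<dots> = (w powr \<theta>) ^ n" using w by (simp add: powr_powr[symmetric] powr_realpow)
    also have "\<dots> = (real n / b) ^ n * (b * w powr \<theta> / real n) ^ n"
      using n assms by (simp add: power_divide power_mult_distrib field_simps)
    also have "(b * w powr \<theta> / real n) ^ n \<le> exp (b * w powr \<theta> / real n) ^ n"
    proof (rule power_mono)
      show "b * w powr \<theta> / real n \<le> exp (b * w powr \<theta> / real n)"
        using exp_ge_add_one_self[of "b * w powr \<theta> / real n"] by linarith
    qed (use assms w in auto)
    also have "exp (b * w powr \<theta> / real n) ^ n = exp (b * w powr \<theta>)"
      using n by (simp add: exp_of_nat_mult[symmetric])
    finally have "w powr p \<le> (real n / b) ^ n * exp (b * w powr \<theta>)"
      using assms by (simp add: mult_left_mono)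
    also have "\<dots> \<le> K * exp (b * w powr \<theta>)"
      by (intro mult_right_mono) (auto simp: K_def)
    finally show ?thesis .
  qed
  moreover have "1 \<le> K" by (simp add: K_def)
  ultimately show ?thesis by blast
qed

lemma linear_minus_powr_le:
  fixes r A g w :: real
  assumes "0 \<le> r" "0 < A" "1 < g" "0 \<le> w"
  shows "r * w - A * w powr g \<le> r * (r / A) powr (1 / (g - 1))"
proof (cases "w \<le> (r / A) powr (1 / (g - 1))")
  case True
  then show ?thesis using assms by (smt (verit) mult_left_mono powr_ge_zero mult_nonneg_nonneg)
next
  case False
  define W where "W = (r / A) powr (1 / (g - 1))"
  have "W powr (g - 1) < w powr (g - 1)"
    using False assms by (intro powr_less_mono2) (auto simp: W_def)
  moreover have "W powr (g - 1) = r / A" using assms by (simp add: W_def powr_powr)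
  ultimately have "r \<le> A * w powr (g - 1)" using assms by (simp add: divide_less_eq mult.commute)
  then have "r * w \<le> A * w powr (g - 1) * w" using assms by (intro mult_right_mono) auto
  also have "A * w powr (g - 1) * w = A * w powr g"
    using False assms by (simp add: powr_diff field_simps)
  finally show ?thesis using assms by (smt (verit) mult_nonneg_nonneg powr_ge_zero)
qed

lemma nn_integral_powr_tail:
  fixes a e C :: real
  assumes "e < -1" "0 < a" "0 \<le> C"
  shows "(\<integral>\<^sup>+ x. ennreal (C * x powr e) * indicator {a..} x \<partial>lborel)
    = ennreal (C * (- (a powr (e + 1)) / (e + 1)))"
proof -
  have "((\<lambda>x. if x \<in> {a..} then C * x powr e else 0) has_integral C * (- (a powr (e + 1)) / (e + 1))) UNIV"
    by (subst has_integral_restrict_UNIV)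
      (intro has_integral_mult_right has_integral_powr_to_inf[OF assms(1,2)])
  then have "(\<integral>\<^sup>+ x. ennreal (if x \<in> {a..} then C * x powr e else 0) \<partial>lborel)
      = ennreal (C * (- (a powr (e + 1)) / (e + 1)))"
    using assms(3) by (intro nn_integral_has_integral_lborel) auto
  moreover have "(\<lambda>x. ennreal (C * x powr e) * indicator {a..} x)
      = (\<lambda>x. ennreal (if x \<in> {a..} then C * x powr e else 0))"
    by (auto simp: indicator_def)
  ultimately show ?thesis by simp
qed

section \<open>Scale functions, their inverse and the function F1\<close>

locale scale_function =
  fixes F :: "real \<Rightarrow> real" and cF \<gamma>1 \<gamma>2 :: real
  assumes F_pos: "\<And>s. 0 < s \<Longrightarrow> 0 < F s"
    and F_strict: "strict_mono_on {0<..} F"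
    and cF_pos: "0 < cF"
    and gamma: "1 < \<gamma>1" "\<gamma>1 \<le> \<gamma>2"
    and F_L: "L_scale \<gamma>1 (1 / cF) F"
    and F_U: "U_scale \<gamma>2 cF F"
begin

lemma cF_ge_1: "1 \<le> cF"
  using U_scale_const_ge_1[OF F_U F_pos] by simp

lemma F_lower_scaling: "0 < r \<Longrightarrow> r \<le> R \<Longrightarrow> (1/cF) * (R/r) powr \<gamma>1 * F r \<le> F R"
  using L_scaleD[OF F_L F_pos] by blast

lemma F_upper_scaling: "0 < r \<Longrightarrow> r \<le> R \<Longrightarrow> F R \<le> cF * (R/r) powr \<gamma>2 * F r"
  using U_scaleD[OF F_U F_pos] by blast

lemma F_le_of_le_1: "0 < s \<Longrightarrow> s \<le> 1 \<Longrightarrow> F s \<le> cF * s powr \<gamma>1 * F 1"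
  using F_lower_scaling[of s 1] cF_pos F_pos[of s] by (simp add: powr_divide field_simps)

lemma exists_F_gt: "\<exists>S>0. t < F S"
proof -
  define X where "X = cF * (\<bar>t\<bar> + 1) / F 1"
  define S where "S = max 1 (X powr (1/\<gamma>1))"
  have X: "0 < X" using cF_pos F_pos[of 1] by (simp add: X_def)
  have S: "1 \<le> S" by (simp add: S_def)
  have "X \<le> S powr \<gamma>1" using gamma X by (intro le_powr_of_root_le) (auto simp: S_def)
  then have "(1/cF) * X * F 1 \<le> (1/cF) * S powr \<gamma>1 * F 1"
    using cF_pos F_pos[of 1] by (intro mult_right_mono mult_left_mono) auto
  also have "\<dots> \<le> F S" using F_lower_scaling[OF _ S] by simp
  finally have "t < F S" using cF_pos F_pos[of 1] by (simp add: X_def)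
  then show ?thesis using S by (intro exI[of _ S]) auto
qed

lemma exists_F_le: "0 < t \<Longrightarrow> \<exists>s>0. F s \<le> t"
proof -
  assume t: "0 < t"
  define Y where "Y = t / (cF * F 1)"
  define s where "s = min 1 (Y powr (1/\<gamma>1))"
  have Y: "0 < Y" using cF_pos F_pos[of 1] t by (simp add: Y_def)
  have s: "0 < s" "s \<le> 1" using Y by (auto simp: s_def)
  have "s powr \<gamma>1 \<le> Y" using gamma Y s by (intro powr_le_of_le_root) (auto simp: s_def)
  then have "cF * s powr \<gamma>1 * F 1 \<le> cF * Y * F 1"
    using cF_pos F_pos[of 1] by (intro mult_right_mono mult_left_mono) auto
  then have "F s \<le> t" using F_le_of_le_1[OF s] cF_pos F_pos[of 1] by (simp add: Y_def)
  then show ?thesis using s by blast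
qed

lemma le_of_F_le_F: "0 < s \<Longrightarrow> 0 < S \<Longrightarrow> F s \<le> F S \<Longrightarrow> s \<le> S"
  using strict_mono_onD[OF F_strict, of S s] by force

lemma bdd_above_F_sublevel: "bdd_above {s. 0 < s \<and> F s \<le> t}"
proof -
  obtain S where "S > 0" "t < F S" using exists_F_gt by blast
  then show ?thesis by (intro bdd_aboveI[of _ S]) (auto intro: le_of_F_le_F)
qed

lemma le_Finv: "0 < s \<Longrightarrow> F s \<le> t \<Longrightarrow> s \<le> Finv F t"
  unfolding Finv_def by (rule cSup_upper) (auto intro: bdd_above_F_sublevel)

lemma Finv_le:
  assumes "0 < t" "0 < S" "t \<le> F S"
  shows "Finv F t \<le> S"
proof -
  obtain s0 where "0 < s0" "F s0 \<le> t" using exists_F_le assms by blast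
  then show ?thesis unfolding Finv_def
    using assms by (intro cSup_least) (auto intro: le_of_F_le_F)
qed

lemma Finv_pos: "0 < t \<Longrightarrow> 0 < Finv F t"
  using exists_F_le le_Finv by fastforce

lemma Finv_le_const_mul:
  assumes d: "0 < d" and t: "0 < t" "t \<le> 2 * F d"
  shows "Finv F t \<le> (3 * cF) powr (1 / \<gamma>1) * d"
proof -
  define K where "K = (3 * cF) powr (1 / \<gamma>1)"
  have K: "1 \<le> K" using cF_ge_1 gamma by (simp add: K_def ge_one_powr_ge_zero)
  have "(1/cF) * (K * d / d) powr \<gamma>1 * F d \<le> F (K * d)"
    using F_lower_scaling[OF d, of "K * d"] K d by simp
  moreover have "(1/cF) * (K * d / d) powr \<gamma>1 * F d = 3 * F d"
    using d gamma cF_pos by (simp add: K_def powr_powr)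
  ultimately have "t \<le> F (K * d)" using t F_pos[OF d] by linarith
  moreover have "0 < K * d" using K d by simp
  ultimately show ?thesis using Finv_le[OF t(1)] by (simp add: K_def)
qed

lemma Finv_ratio_le:
  assumes d: "0 < d" and t: "0 < t" "t \<le> F d"
  shows "d / Finv F t \<le> (cF * (F d / t)) powr (1 / \<gamma>1)"
proof -
  define z where "z = t / (cF * F d)"
  have z: "0 < z" "z \<le> 1"
    using t cF_ge_1 F_pos[OF d] by (auto simp: z_def field_simps intro: order_trans[of _ "F d"])
  define s where "s = d * z powr (1 / \<gamma>1)"
  have "z powr (1 / \<gamma>1) \<le> 1" using z gamma powr_mono2[of "1/\<gamma>1" z 1] by simp
  then have s: "0 < s" "s \<le> d" using d z by (auto simp: s_def mult_le_cancel_left1)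
  have "(1/cF) * (d / s) powr \<gamma>1 * F s \<le> F d" using F_lower_scaling[OF s] .
  moreover have "(d / s) powr \<gamma>1 = 1 / z"
    using d z gamma by (simp add: s_def powr_divide powr_powr)
  ultimately have "F s \<le> t" using z cF_pos F_pos[OF d] F_pos[OF s(1)] by (simp add: z_def field_simps)
  then have "s \<le> Finv F t" using le_Finv[OF s(1)] by simp
  then have "d / Finv F t \<le> d / s" using s d by (intro divide_left_mono) auto
  also have "d / s = (1 / z) powr (1 / \<gamma>1)" using d z by (simp add: s_def powr_divide)
  finally show ?thesis by (simp add: z_def)
qed

lemma Finv_ge_large_time:
  assumes d: "0 < d" and t: "F d \<le> t"
  shows "d * (t / (cF * F d)) powr (1 / \<gamma>2) \<le> Finv F t"
proof -
  define s where "s = d * (t / (cF * F d)) powr (1 / \<gamma>2)"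
  have t0: "0 < t" using F_pos[OF d] t by linarith
  have s: "0 < s" using d t0 cF_pos F_pos[OF d] by (simp add: s_def)
  show ?thesis
  proof (cases "s \<le> d")
    case True
    then show ?thesis using le_Finv[OF d t] by (simp add: s_def)
  next
    case False
    then have "F s \<le> cF * (s / d) powr \<gamma>2 * F d" using F_upper_scaling[OF d] by simp
    also have "(s / d) powr \<gamma>2 = t / (cF * F d)"
      using d t0 cF_pos F_pos[OF d] gamma by (simp add: s_def powr_powr)
    finally have "F s \<le> t" using cF_pos F_pos[OF d] by simp
    then show ?thesis using le_Finv[OF s] by (simp add: s_def)
  qed
qed

lemma bdd_above_F1_set:
  assumes r: "0 \<le> r" and t: "0 < t"
  shows "bdd_above ((\<lambda>s. r / s - t / F s) ` {0<..})"
proof -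
  define A where "A = t / (cF * F 1)"
  have A: "0 < A" using cF_pos F_pos[of 1] t by (simp add: A_def)
  have "r / s - t / F s \<le> max r (r * (r / A) powr (1 / (\<gamma>1 - 1)))" if s: "0 < s" for s
  proof (cases "1 \<le> s")
    case True
    then have "r / s \<le> r" using r by (simp add: divide_le_eq mult_le_cancel_left1)
    moreover have "0 \<le> t / F s" using t F_pos[OF s] by simp
    ultimately show ?thesis by linarith
  next
    case False
    have "A * (1 / s) powr \<gamma>1 = t / (cF * s powr \<gamma>1 * F 1)"
      using s by (simp add: A_def powr_divide field_simps)
    also have "\<dots> \<le> t / F s"
      using F_le_of_le_1[OF s] False t F_pos[OF s] by (intro divide_left_mono) auto
    finally have "r / s - t / F s \<le> r * (1 / s) - A * (1 / s) powr \<gamma>1" by simp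
    also have "\<dots> \<le> r * (r / A) powr (1 / (\<gamma>1 - 1))"
      using r A gamma s by (intro linear_minus_powr_le) auto
    finally show ?thesis by linarith
  qed
  then show ?thesis by (auto intro!: bdd_aboveI2)
qed

lemma F1_ge: "0 \<le> r \<Longrightarrow> 0 < t \<Longrightarrow> 0 < s \<Longrightarrow> r / s - t / F s \<le> F1 F r t"
  unfolding F1_def using bdd_above_F1_set by (intro cSUP_upper) auto

lemma F1_ge_minus_one:
  assumes "0 \<le> r" "0 < t"
  shows "-1 \<le> F1 F r t"
proof -
  obtain S where S: "S > 0" "t < F S" using exists_F_gt by blast
  have "r / S - t / F S \<le> F1 F r t" using F1_ge[OF assms S(1)] .
  moreover have "0 \<le> r / S" "t / F S \<le> 1" using assms S by auto
  ultimately show ?thesis by linarith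
qed

lemma F1_nonneg:
  assumes "0 < d" "0 < t" "t \<le> F d"
  shows "0 \<le> F1 F d t"
proof -
  have "1 - t / F d \<le> F1 F d t" using F1_ge[of d t d] assms by simp
  moreover have "t / F d \<le> 1" using assms F_pos[of d] by simp
  ultimately show ?thesis by linarith
qed

text \<open>The test point is \<open>s = d / M\<close>, for which the upper scaling of \<open>F\<close>
  gives \<open>t / F s \<le> M / 2\<close> while \<open>d / s = M\<close>.\<close>
lemma F1_ge_large_ratio:
  assumes d: "0 < d" and t: "0 < t" "2 * cF * t \<le> F d"
  shows "(F d / (2 * cF * t)) powr (1 / (\<gamma>2 - 1)) / 2 \<le> F1 F d t"
proof -
  define w where "w = F d / (2 * cF * t)"
  define M where "M = w powr (1 / (\<gamma>2 - 1))"
  define s where "s = d / M"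
  have w: "1 \<le> w" using t cF_pos by (simp add: w_def)
  have M: "1 \<le> M" using w gamma by (simp add: M_def ge_one_powr_ge_zero)
  have s: "0 < s" "s \<le> d" using d M by (auto simp: s_def divide_le_eq)
  have dsM: "d / s = M" using d M by (simp add: s_def)
  have "M powr \<gamma>2 = M * M powr (\<gamma>2 - 1)" using M by (simp add: powr_diff)
  also have "M powr (\<gamma>2 - 1) = w" using gamma w by (simp add: M_def powr_powr)
  finally have "F d \<le> cF * (M * w) * F s" using F_upper_scaling[OF s] dsM by simp
  also have "cF * (M * w) = M / 2 * (F d / t)"
    using cF_pos t by (simp add: w_def field_simps)
  finally have "t / F s \<le> M / 2"
    using t F_pos[OF d] F_pos[OF s(1)] by (simp add: field_simps)
  moreover have "M - t / F s \<le> F1 F d t" using F1_ge[OF _ t(1) s(1), of d] d dsM by simp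
  ultimately show ?thesis by (simp add: M_def w_def)
qed

lemma powr_ratio_mul_exp_F1_bounded:
  assumes a0: "0 < a0" and p: "0 \<le> p"
  shows "\<exists>K>0. \<forall>d t. 0 < d \<longrightarrow> 0 < t \<longrightarrow> t \<le> F d \<longrightarrow>
           (F d / t) powr p * exp (- a0 * F1 F d t) \<le> K"
proof -
  define \<theta> where "\<theta> = 1 / (\<gamma>2 - 1)"
  have \<theta>: "0 < \<theta>" using gamma by (simp add: \<theta>_def)
  obtain Ke where Ke: "1 \<le> Ke" "\<And>w. w \<ge> 1 \<Longrightarrow> w powr p \<le> Ke * exp (a0 / 2 * w powr \<theta>)"
    using powr_le_const_mul_exp_powr[of "a0/2" \<theta> p] a0 \<theta> by auto
  define K where "K = (2 * cF) powr p * Ke"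
  have "(F d / t) powr p * exp (- a0 * F1 F d t) \<le> K"
    if d: "0 < d" and t: "0 < t" "t \<le> F d" for d t
  proof (cases "F d / t \<le> 2 * cF")
    case True
    have "exp (- a0 * F1 F d t) \<le> 1" using F1_nonneg[OF d t] a0 by simp
    moreover have "(F d / t) powr p \<le> (2 * cF) powr p" using True p t F_pos[OF d] by (intro powr_mono2) auto
    moreover have "(2 * cF) powr p \<le> K"
      using mult_left_mono[OF Ke(1), of "(2 * cF) powr p"] by (simp add: K_def)
    ultimately show ?thesis by (smt (verit) mult_left_le powr_ge_zero exp_ge_zero)
  next
    case False
    define w where "w = F d / (2 * cF * t)"
    have w: "1 \<le> w" using False cF_pos t by (simp add: w_def field_simps)
    have "a0 * (w powr \<theta> / 2) \<le> a0 * F1 F d t"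
      using F1_ge_large_ratio[OF d t(1)] False t a0 cF_pos
      by (intro mult_left_mono) (auto simp: w_def \<theta>_def field_simps)
    then have E: "exp (- a0 * F1 F d t) \<le> exp (- (a0 / 2 * w powr \<theta>))" by simp
    have "(F d / t) powr p = (2 * cF) powr p * w powr p"
      using cF_pos t by (simp add: w_def powr_mult[symmetric])
    also have "\<dots> \<le> (2 * cF) powr p * (Ke * exp (a0 / 2 * w powr \<theta>))"
      using Ke(2)[OF w] by (intro mult_left_mono) auto
    finally have "(F d / t) powr p * exp (- a0 * F1 F d t)
        \<le> (2 * cF) powr p * (Ke * exp (a0 / 2 * w powr \<theta>)) * exp (- (a0 / 2 * w powr \<theta>))"
      using E Ke(1) by (intro mult_mono) auto
    also have "\<dots> = K" by (simp add: K_def exp_minus field_simps)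
    finally show ?thesis .
  qed
  moreover have "0 < K" using Ke cF_pos by (simp add: K_def)
  ultimately show ?thesis by blast
qed

end

section \<open>Two-sided bounds for the jump kernel\<close>

locale jump_kernel_setting = scale_function F cF \<gamma>1 \<gamma>2
  for F :: "real \<Rightarrow> real" and cF \<gamma>1 \<gamma>2 :: real +
  fixes \<mu> :: "'a::metric_space measure" and CV D :: real
    and \<psi> :: "real \<Rightarrow> real" and \<beta>1 \<beta>2 CL CU :: real
    and q :: "real \<Rightarrow> 'a \<Rightarrow> 'a \<Rightarrow> real" and c a0 :: real
  assumes V_pos: "\<And>x r. 0 < r \<Longrightarrow> 0 < V \<mu> x r"
    and V_mono: "\<And>x r R. r \<le> R \<Longrightarrow> V \<mu> x r \<le> V \<mu> x R"
    and V_doubling: "\<And>x r R. 0 < r \<Longrightarrow> r \<le> R \<Longrightarrow>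
      V \<mu> x R \<le> CV * (R / r) powr D * V \<mu> x r"
    and D_nonneg: "0 \<le> D"
    and psi_pos: "\<And>s. 0 < s \<Longrightarrow> 0 < \<psi> s"
    and beta: "0 < \<beta>1" "0 \<le> \<beta>2"
    and CL_pos: "0 < CL"
    and psi_L: "L_scale \<beta>1 CL \<psi>"
    and psi_U: "U_scale \<beta>2 CU \<psi>"
    and c_a0: "1 \<le> c" "0 < a0"
    and q_lower: "\<And>t x y. 0 < t \<Longrightarrow> F (dist x y) \<le> t \<Longrightarrow>
      1 / (c * V \<mu> x (Finv F t)) \<le> q t x y"
    and q_upper: "\<And>t x y. 0 < t \<Longrightarrow>
      q t x y \<le> c / V \<mu> x (Finv F t) * exp (- a0 * F1 F (dist x y) t)"
begin

abbreviation Jpsi_integrand :: "real \<Rightarrow> 'a \<Rightarrow> 'a \<Rightarrow> real" where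
  "Jpsi_integrand t x y \<equiv> q t x y / (t * \<psi> (Finv F t))"

lemma CV_ge_1: "1 \<le> CV"
  using V_doubling[of 1 1 undefined] V_pos[of 1 undefined] by simp

lemma CU_ge_1: "1 \<le> CU"
  using U_scale_const_ge_1[OF psi_U psi_pos] by simp

lemma V_psi_doubling:
  assumes "0 < r" "r \<le> R"
  shows "V \<mu> x R * \<psi> R \<le> CV * CU * (R / r) powr (D + \<beta>2) * (V \<mu> x r * \<psi> r)"
proof -
  have "V \<mu> x R * \<psi> R \<le> (CV * (R / r) powr D * V \<mu> x r) * (CU * (R / r) powr \<beta>2 * \<psi> r)"
    using V_doubling[OF assms] U_scaleD[OF psi_U psi_pos assms] CV_ge_1
      V_pos[OF assms(1), of x] psi_pos[of R] assms
    by (intro mult_mono) auto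
  then show ?thesis by (simp add: powr_add algebra_simps)
qed

lemma Jpsi_integrand_lower_bound:
  "\<exists>C>0. \<forall>x y t. x \<noteq> y \<longrightarrow> F (dist x y) \<le> t \<longrightarrow> t \<le> 2 * F (dist x y) \<longrightarrow>
     1 / (C * F (dist x y) * V \<mu> x (dist x y) * \<psi> (dist x y)) \<le> Jpsi_integrand t x y"
proof -
  define K where "K = (3 * cF) powr (1 / \<gamma>1)"
  define C where "C = 2 * c * CV * CU * K powr (D + \<beta>2)"
  have K: "1 \<le> K" using cF_ge_1 gamma by (simp add: K_def ge_one_powr_ge_zero)
  have C: "0 < C" using c_a0 CV_ge_1 CU_ge_1 K by (simp add: C_def)
  have "1 / (C * F d * V \<mu> x d * \<psi> d) \<le> Jpsi_integrand t x y"
    if xy: "x \<noteq> y" and d_def: "d = dist x y" and t: "F d \<le> t" "t \<le> 2 * F d" for x y t d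
  proof -
    have d: "0 < d" using xy d_def by simp
    have t0: "0 < t" using t F_pos[OF d] by linarith
    define \<rho> where "\<rho> = Finv F t"
    have \<rho>: "d \<le> \<rho>" "\<rho> \<le> K * d"
      using le_Finv[OF d t(1)] Finv_le_const_mul[OF d t0 t(2)] by (auto simp: \<rho>_def K_def)
    have "V \<mu> x \<rho> * \<psi> \<rho> \<le> CV * CU * (\<rho> / d) powr (D + \<beta>2) * (V \<mu> x d * \<psi> d)"
      using V_psi_doubling[OF d \<rho>(1)] .
    also have "\<dots> \<le> CV * CU * K powr (D + \<beta>2) * (V \<mu> x d * \<psi> d)"
      using \<rho> d D_nonneg beta CV_ge_1 CU_ge_1 V_pos[OF d, of x] psi_pos[OF d]
      by (intro mult_right_mono mult_left_mono powr_mono2) (auto simp: field_simps)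
    finally have V\<rho>: "V \<mu> x \<rho> * \<psi> \<rho> \<le> CV * CU * K powr (D + \<beta>2) * (V \<mu> x d * \<psi> d)" .
    have \<rho>0: "0 < \<rho>" using d \<rho> by linarith
    have "c * V \<mu> x \<rho> * (t * \<psi> \<rho>) = (c * t) * (V \<mu> x \<rho> * \<psi> \<rho>)" by simp
    also have "\<dots> \<le> (c * (2 * F d)) * (CV * CU * K powr (D + \<beta>2) * (V \<mu> x d * \<psi> d))"
      using V\<rho> t c_a0 F_pos[OF d] V_pos[OF \<rho>0, of x] psi_pos[OF \<rho>0]
      by (intro mult_mono[OF mult_left_mono]) auto
    also have "\<dots> = C * F d * V \<mu> x d * \<psi> d" by (simp add: C_def)
    finally have "1 / (C * F d * V \<mu> x d * \<psi> d) \<le> 1 / (c * V \<mu> x \<rho> * (t * \<psi> \<rho>))"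
      using c_a0 t0 V_pos[OF \<rho>0, of x] psi_pos[OF \<rho>0] C F_pos[OF d] V_pos[OF d, of x] psi_pos[OF d]
      by (intro divide_left_mono) (auto intro!: mult_pos_pos)
    also have "\<dots> = 1 / (c * V \<mu> x \<rho>) / (t * \<psi> \<rho>)" by simp
    also have "\<dots> \<le> q t x y / (t * \<psi> \<rho>)"
      using q_lower[OF t0] t d_def t0 psi_pos[OF \<rho>0] by (intro divide_right_mono) (auto simp: \<rho>_def)
    finally show ?thesis by (simp add: \<rho>_def)
  qed
  then show ?thesis using C by blast
qed

lemma Jpsi_integrand_upper_bound_small_time:
  "\<exists>A>0. \<forall>x y t. x \<noteq> y \<longrightarrow> 0 < t \<longrightarrow> t \<le> F (dist x y) \<longrightarrow>
     Jpsi_integrand t x y \<le> A / (F (dist x y) * V \<mu> x (dist x y) * \<psi> (dist x y))"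
proof -
  define p where "p = (D + \<beta>2) / \<gamma>1"
  have p: "0 \<le> p" using D_nonneg beta gamma by (simp add: p_def)
  obtain K0 where K0: "K0 > 0"
    and K0_bound: "\<And>d t. 0 < d \<Longrightarrow> 0 < t \<Longrightarrow> t \<le> F d \<Longrightarrow>
      (F d / t) powr (p + 1) * exp (- a0 * F1 F d t) \<le> K0"
    using powr_ratio_mul_exp_F1_bounded[OF c_a0(2), of "p + 1"] p by auto
  define A where "A = c * CV * CU * cF powr p * K0"
  have A: "0 < A" using c_a0 CV_ge_1 CU_ge_1 K0 cF_pos by (simp add: A_def)
  have "Jpsi_integrand t x y \<le> A / (F d * V \<mu> x d * \<psi> d)"
    if xy: "x \<noteq> y" and d_def: "d = dist x y" and t: "0 < t" "t \<le> F d" for x y t d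
  proof -
    have d: "0 < d" using xy d_def by simp
    define \<rho> where "\<rho> = Finv F t"
    define u where "u = F d / t"
    define E where "E = exp (- a0 * F1 F d t)"
    have \<rho>: "0 < \<rho>" "\<rho> \<le> d" using Finv_pos[OF t(1)] Finv_le[OF t(1) d t(2)] by (auto simp: \<rho>_def)
    have u: "1 \<le> u" using t by (simp add: u_def)
    have Vpsi: "0 < V \<mu> x \<rho> * \<psi> \<rho>" using V_pos[OF \<rho>(1)] psi_pos[OF \<rho>(1)] by simp
    have "(d / \<rho>) powr (D + \<beta>2) \<le> ((cF * u) powr (1 / \<gamma>1)) powr (D + \<beta>2)"
      using Finv_ratio_le[OF d t] \<rho> d D_nonneg beta by (intro powr_mono2) (auto simp: \<rho>_def u_def)
    also have "\<dots> = cF powr p * u powr p"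
      using cF_pos u by (simp add: powr_powr p_def powr_mult)
    finally have "V \<mu> x d * \<psi> d \<le> CV * CU * (cF powr p * u powr p) * (V \<mu> x \<rho> * \<psi> \<rho>)"
      using V_psi_doubling[OF \<rho>] CV_ge_1 CU_ge_1 Vpsi
      by (smt (verit) mult_right_mono mult_left_mono mult_nonneg_nonneg)
    then have "c * E * F d * (V \<mu> x d * \<psi> d)
        \<le> c * E * F d * (CV * CU * (cF powr p * u powr p) * (V \<mu> x \<rho> * \<psi> \<rho>))"
      using c_a0 F_pos[OF d] by (intro mult_left_mono) (auto simp: E_def)
    also have "\<dots> = c * CV * CU * cF powr p * (u powr (p + 1) * E) * (t * (V \<mu> x \<rho> * \<psi> \<rho>))"
      using t u by (simp add: u_def powr_add field_simps)
    also have "\<dots> \<le> A * (t * (V \<mu> x \<rho> * \<psi> \<rho>))"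
      using K0_bound[OF d t] c_a0 CV_ge_1 CU_ge_1 cF_pos t Vpsi
      by (simp add: A_def E_def u_def mult_left_mono mult_right_mono)
    finally have main: "c * E * F d * (V \<mu> x d * \<psi> d) \<le> A * (t * (V \<mu> x \<rho> * \<psi> \<rho>))" .
    have "q t x y / (t * \<psi> \<rho>) \<le> (c / V \<mu> x \<rho> * E) / (t * \<psi> \<rho>)"
      using q_upper[OF t(1), of x y] t psi_pos[OF \<rho>(1)]
      by (intro divide_right_mono) (auto simp: \<rho>_def E_def d_def)
    also have "\<dots> \<le> A / (F d * V \<mu> x d * \<psi> d)"
      using main t Vpsi F_pos[OF d] V_pos[OF d, of x] psi_pos[OF d] V_pos[OF \<rho>(1), of x]
        psi_pos[OF \<rho>(1)] by (simp add: field_simps)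
    finally show ?thesis by (simp add: \<rho>_def)
  qed
  then show ?thesis using A by blast
qed

lemma Jpsi_integrand_upper_bound_large_time:
  "\<exists>B>0. \<forall>x y t. x \<noteq> y \<longrightarrow> F (dist x y) \<le> t \<longrightarrow>
     Jpsi_integrand t x y
       \<le> B / (V \<mu> x (dist x y) * \<psi> (dist x y))
          * F (dist x y) powr (\<beta>1 / \<gamma>2) * t powr (-1 - \<beta>1 / \<gamma>2)"
proof -
  define a where "a = \<beta>1 / \<gamma>2"
  define B where "B = c * exp a0 * cF powr a / CL"
  have B: "0 < B" using c_a0 CL_pos cF_pos by (simp add: B_def)
  have "Jpsi_integrand t x y \<le> B / (V \<mu> x d * \<psi> d) * F d powr a * t powr (-1 - a)"
    if xy: "x \<noteq> y" and d_def: "d = dist x y" and t: "F d \<le> t" for x y t d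
  proof -
    have d: "0 < d" using xy d_def by simp
    have t0: "0 < t" using F_pos[OF d] t by linarith
    define \<rho> where "\<rho> = Finv F t"
    define z where "z = t / (cF * F d)"
    have z: "0 < z" using t0 cF_pos F_pos[OF d] by (simp add: z_def)
    have \<rho>: "d \<le> \<rho>" "d * z powr (1 / \<gamma>2) \<le> \<rho>"
      using le_Finv[OF d t] Finv_ge_large_time[OF d t] by (auto simp: \<rho>_def z_def)
    have "z powr a = (d * z powr (1 / \<gamma>2) / d) powr \<beta>1"
      using d z gamma by (simp add: powr_powr a_def)
    also have "\<dots> \<le> (\<rho> / d) powr \<beta>1"
      using \<rho> d z beta by (intro powr_mono2 divide_right_mono) auto
    finally have "CL * z powr a * \<psi> d \<le> CL * (\<rho> / d) powr \<beta>1 * \<psi> d"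
      using CL_pos psi_pos[OF d] by (intro mult_right_mono mult_left_mono) auto
    also have "\<dots> \<le> \<psi> \<rho>" using L_scaleD[OF psi_L psi_pos[OF d] d \<rho>(1)] .
    finally have psi_ge: "CL * z powr a * \<psi> d \<le> \<psi> \<rho>" .
    have "- a0 * F1 F d t \<le> a0"
      using F1_ge_minus_one[of d t] d t0 c_a0 mult_left_mono[of "-1" "F1 F d t" a0] by simp
    then have "q t x y \<le> c / V \<mu> x \<rho> * exp a0"
      using q_upper[OF t0, of x y] c_a0 V_pos[of \<rho> x] d \<rho>
      by (smt (verit) d_def \<rho>_def divide_nonneg_pos exp_le_cancel_iff mult_left_mono)
    also have "\<dots> \<le> c / V \<mu> x d * exp a0"
      using V_mono[OF \<rho>(1), of x] V_pos[OF d, of x] c_a0 by (intro mult_right_mono divide_left_mono) auto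
    finally have "q t x y / (t * \<psi> \<rho>) \<le> (c / V \<mu> x d * exp a0) / (t * (CL * z powr a * \<psi> d))"
      using psi_ge t0 c_a0 CL_pos z psi_pos[OF d] V_pos[OF d, of x]
      by (intro frac_le mult_left_mono) auto
    also have "\<dots> = B / (V \<mu> x d * \<psi> d) * F d powr a * t powr (-1 - a)"
    proof -
      have zeq: "z powr a = t powr a / (cF powr a * F d powr a)"
        using t0 cF_pos F_pos[OF d] by (simp add: z_def powr_divide powr_mult)
      have teq: "t powr (-1 - a) = 1 / (t * t powr a)"
        using t0 by (simp add: powr_diff powr_minus divide_inverse)
      show ?thesis unfolding zeq teq
        using t0 cF_pos F_pos[OF d] CL_pos V_pos[OF d, of x] psi_pos[OF d]
        by (simp add: B_def field_simps)
    qed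
    finally show ?thesis by (simp add: \<rho>_def)
  qed
  then show ?thesis using B by (auto simp: a_def)
qed

lemma Jpsi_lower_bound:
  "\<exists>C>0. \<forall>x y. x \<noteq> y \<longrightarrow>
     ennreal (1 / (C * V \<mu> x (dist x y) * \<psi> (dist x y))) \<le> Jpsi q F \<psi> x y"
proof -
  obtain C where C: "C > 0"
    and low: "\<And>x y t. x \<noteq> y \<Longrightarrow> F (dist x y) \<le> t \<Longrightarrow> t \<le> 2 * F (dist x y) \<Longrightarrow>
      1 / (C * F (dist x y) * V \<mu> x (dist x y) * \<psi> (dist x y)) \<le> Jpsi_integrand t x y"
    using Jpsi_integrand_lower_bound by blast
  have "ennreal (1 / (C * V \<mu> x (dist x y) * \<psi> (dist x y))) \<le> Jpsi q F \<psi> x y" if xy: "x \<noteq> y" for x y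
  proof -
    define d where "d = dist x y"
    define h where "h = 1 / (C * F d * V \<mu> x d * \<psi> d)"
    have d: "0 < d" using xy by (simp add: d_def)
    have h: "0 \<le> h" using C F_pos[OF d] V_pos[OF d, of x] psi_pos[OF d] by (simp add: h_def)
    have "ennreal h * indicator {F d..2 * F d} t
        \<le> ennreal (Jpsi_integrand t x y) * indicator {0<..} t" for t
      using low[OF xy] F_pos[OF d] by (auto simp: h_def d_def indicator_def intro: ennreal_leI)
    then have "(\<integral>\<^sup>+ t. ennreal h * indicator {F d..2 * F d} t \<partial>lborel) \<le> Jpsi q F \<psi> x y"
      unfolding Jpsi_def by (intro nn_integral_mono) auto
    moreover have "(\<integral>\<^sup>+ t. ennreal h * indicator {F d..2 * F d} t \<partial>lborel) = ennreal (h * F d)"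
      using F_pos[OF d] h by (simp add: nn_integral_cmult_indicator ennreal_mult)
    moreover have "h * F d = 1 / (C * V \<mu> x d * \<psi> d)" using F_pos[OF d] by (simp add: h_def)
    ultimately show ?thesis by (simp add: d_def)
  qed
  then show ?thesis using C by blast
qed

lemma Jpsi_upper_bound:
  "\<exists>C>0. \<forall>x y. x \<noteq> y \<longrightarrow>
     Jpsi q F \<psi> x y \<le> ennreal (C / (V \<mu> x (dist x y) * \<psi> (dist x y)))"
proof -
  define a where "a = \<beta>1 / \<gamma>2"
  have a: "0 < a" using beta gamma by (simp add: a_def)
  obtain A where A: "A > 0"
    and small: "\<And>x y t. x \<noteq> y \<Longrightarrow> 0 < t \<Longrightarrow> t \<le> F (dist x y) \<Longrightarrow>
      Jpsi_integrand t x y \<le> A / (F (dist x y) * V \<mu> x (dist x y) * \<psi> (dist x y))"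
    using Jpsi_integrand_upper_bound_small_time by blast
  obtain B where B: "B > 0" and large: "\<And>x y t. x \<noteq> y \<Longrightarrow> F (dist x y) \<le> t \<Longrightarrow>
      Jpsi_integrand t x y
        \<le> B / (V \<mu> x (dist x y) * \<psi> (dist x y)) * F (dist x y) powr a * t powr (-1 - a)"
    using Jpsi_integrand_upper_bound_large_time unfolding a_def by blast
  have "Jpsi q F \<psi> x y \<le> ennreal ((A + B / a) / (V \<mu> x (dist x y) * \<psi> (dist x y)))"
    if xy: "x \<noteq> y" for x y
  proof -
    define d where "d = dist x y"
    define W where "W = V \<mu> x d * \<psi> d"
    define C2 where "C2 = B / W * F d powr a"
    have d: "0 < d" using xy by (simp add: d_def)
    have W: "0 < W" using V_pos[OF d, of x] psi_pos[OF d] by (simp add: W_def)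
    have Fd: "0 < F d" using F_pos[OF d] .
    have C2: "0 \<le> C2" using B W by (simp add: C2_def)
    have "ennreal (Jpsi_integrand t x y) * indicator {0<..} t
        \<le> ennreal (A / (F d * W)) * indicator {0<..<F d} t + ennreal (C2 * t powr (-1 - a)) * indicator {F d..} t"
      for t
    proof -
      consider "t \<le> 0" | "0 < t" "t < F d" | "F d \<le> t" by linarith
      then show ?thesis
      proof cases
        case 2
        then show ?thesis using small[OF xy, of t] by (simp add: d_def W_def mult.assoc ennreal_leI)
      next
        case 3
        then have "Jpsi_integrand t x y \<le> C2 * t powr (-1 - a)"
          using large[OF xy] by (simp add: C2_def W_def d_def)
        then show ?thesis using 3 Fd by (simp add: ennreal_leI)
      qed simp
    qed
    then have "Jpsi q F \<psi> x y \<le> (\<integral>\<^sup>+ t. ennreal (A / (F d * W)) * indicator {0<..<F d} t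
        + ennreal (C2 * t powr (-1 - a)) * indicator {F d..} t \<partial>lborel)"
      unfolding Jpsi_def by (intro nn_integral_mono) auto
    also have "\<dots> = (\<integral>\<^sup>+ t. ennreal (A / (F d * W)) * indicator {0<..<F d} t \<partial>lborel)
        + (\<integral>\<^sup>+ t. ennreal (C2 * t powr (-1 - a)) * indicator {F d..} t \<partial>lborel)"
      by (intro nn_integral_add) measurable
    also have "(\<integral>\<^sup>+ t. ennreal (A / (F d * W)) * indicator {0<..<F d} t \<partial>lborel)
        = ennreal (A / (F d * W)) * ennreal (F d)"
      using Fd by (simp add: nn_integral_cmult_indicator)
    also have "\<dots> = ennreal (A / W)"
      using Fd W A by (simp add: ennreal_mult[symmetric])
    also have "(\<integral>\<^sup>+ t. ennreal (C2 * t powr (-1 - a)) * indicator {F d..} t \<partial>lborel)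
        = ennreal (C2 * (- (F d powr (-1 - a + 1)) / (-1 - a + 1)))"
      using a Fd C2 by (intro nn_integral_powr_tail) auto
    also have "C2 * (- (F d powr (-1 - a + 1)) / (-1 - a + 1)) = B / a / W"
      using a Fd W by (simp add: C2_def powr_minus field_simps)
    also have "ennreal (A / W) + ennreal (B / a / W) = ennreal (A / W + B / a / W)"
      using A B a W by (intro ennreal_plus[symmetric]) auto
    also have "A / W + B / a / W = (A + B / a) / W" by (simp add: add_divide_distrib)
    finally show ?thesis by (simp add: W_def d_def)
  qed
  moreover have "0 < A + B / a" using A B a by (simp add: add_pos_pos)
  ultimately show ?thesis by blast
qed

lemma Jpsi_comparable:
  "\<exists>Cbar>1. \<forall>x y. x \<noteq> y \<longrightarrow>
     ennreal (inverse Cbar / (V \<mu> x (dist x y) * \<psi> (dist x y))) \<le> Jpsi q F \<psi> x y \<and>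
     Jpsi q F \<psi> x y \<le> ennreal (Cbar / (V \<mu> x (dist x y) * \<psi> (dist x y)))"
proof -
  obtain C1 where C1: "C1 > 0" and low: "\<And>x y. x \<noteq> y \<Longrightarrow>
      ennreal (1 / (C1 * V \<mu> x (dist x y) * \<psi> (dist x y))) \<le> Jpsi q F \<psi> x y"
    using Jpsi_lower_bound by blast
  obtain C2 where up: "\<And>x y. x \<noteq> y \<Longrightarrow>
      Jpsi q F \<psi> x y \<le> ennreal (C2 / (V \<mu> x (dist x y) * \<psi> (dist x y)))"
    using Jpsi_upper_bound by blast
  define Cbar where "Cbar = max 2 (max C1 C2)"
  have "ennreal (inverse Cbar / (V \<mu> x (dist x y) * \<psi> (dist x y))) \<le> Jpsi q F \<psi> x y \<and>
     Jpsi q F \<psi> x y \<le> ennreal (Cbar / (V \<mu> x (dist x y) * \<psi> (dist x y)))" if xy: "x \<noteq> y" for x y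
  proof -
    define W where "W = V \<mu> x (dist x y) * \<psi> (dist x y)"
    have W: "0 < W" using xy V_pos psi_pos by (simp add: W_def)
    have "inverse Cbar / W \<le> 1 / (C1 * W)"
      using C1 W by (simp add: Cbar_def field_simps)
    then have "ennreal (inverse Cbar / W) \<le> Jpsi q F \<psi> x y"
      using low[OF xy] by (simp add: W_def mult.assoc order.trans[OF ennreal_leI])
    moreover have "C2 / W \<le> Cbar / W" using W by (simp add: Cbar_def divide_right_mono)
    then have "Jpsi q F \<psi> x y \<le> ennreal (Cbar / W)"
      using up[OF xy] by (simp add: W_def order.trans[OF _ ennreal_leI])
    ultimately show ?thesis by (simp add: W_def)
  qed
  moreover have "1 < Cbar" by (simp add: Cbar_def)
  ultimately show ?thesis by blast
qed

end

lemma V_pos_of_full_support: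
  fixes \<mu> :: "'a::heine_borel measure"
  assumes "sets \<mu> = sets borel" "\<And>K. compact K \<Longrightarrow> emeasure \<mu> K < \<infinity>"
    and "\<And>x r. 0 < r \<Longrightarrow> emeasure \<mu> (ball x r) > 0" "0 < r"
  shows "0 < V \<mu> x r"
proof -
  have "emeasure \<mu> (ball x r) \<le> emeasure \<mu> (cball x r)"
    using assms(1) by (intro emeasure_mono) auto
  also have "\<dots> < \<infinity>" using assms(2) by simp
  finally show ?thesis
    unfolding V_def measure_def using assms(3,4) by (simp add: enn2real_positive_iff)
qed

lemma V_mono_of_locally_finite:
  fixes \<mu> :: "'a::heine_borel measure"
  assumes "sets \<mu> = sets borel" "\<And>K. compact K \<Longrightarrow> emeasure \<mu> K < \<infinity>" "r \<le> R"
  shows "V \<mu> x r \<le> V \<mu> x R"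
proof -
  have "emeasure \<mu> (ball x R) \<le> emeasure \<mu> (cball x R)"
    using assms(1) by (intro emeasure_mono) auto
  also have "\<dots> < \<infinity>" using assms(2) by simp
  finally show ?thesis
    unfolding V_def using assms(1,3) by (intro measure_mono_fmeasurable fmeasurableI) auto
qed

lemma VD_imp_doubling_bound:
  assumes "VD \<mu> d2" "\<And>x r. 0 < r \<Longrightarrow> 0 < V \<mu> x r"
  obtains CV where "\<And>x r R. 0 < r \<Longrightarrow> r \<le> R \<Longrightarrow>
    V \<mu> x R \<le> CV * (R / r) powr max d2 0 * V \<mu> x r"
proof -
  obtain CV where CV: "CV \<ge> 1" and vd: "\<And>x r R. 0 < r \<Longrightarrow> r \<le> R \<Longrightarrow>
      V \<mu> x R / V \<mu> x r \<le> CV * (R / r) powr d2"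
    using assms(1) unfolding VD_def by blast
  have "V \<mu> x R \<le> CV * (R / r) powr max d2 0 * V \<mu> x r" if "0 < r" "r \<le> R" for x r R
  proof -
    have "V \<mu> x R / V \<mu> x r \<le> CV * (R / r) powr max d2 0"
      using vd[OF that] that CV by (smt (verit) mult_left_mono powr_mono divide_nonneg_pos le_divide_eq_1_pos)
    then show ?thesis using assms(2)[OF that(1), of x] by (simp add: pos_divide_le_eq)
  qed
  then show ?thesis by (rule that)
qed

lemma Diff_kernel_bounds:
  assumes "Diff \<mu> F q"
  obtains c a0 where "1 \<le> c" "0 < a0"
    and "\<And>t x y. 0 < t \<Longrightarrow> F (dist x y) \<le> t \<Longrightarrow>
      1 / (c * V \<mu> x (Finv F t)) \<le> q t x y"
    and "\<And>t x y. 0 < t \<Longrightarrow> q t x y \<le> c / V \<mu> x (Finv F t) * exp (- a0 * F1 F (dist x y) t)"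
proof -
  obtain c a0 where "c \<ge> 1" "a0 > 0" and bounds: "\<forall>t x y. 0 < t \<longrightarrow>
        (if F (dist x y) \<le> t then 1 else 0) / (c * V \<mu> x (Finv F t)) \<le> q t x y \<and>
        q t x y \<le> c / V \<mu> x (Finv F t) * exp (- a0 * F1 F (dist x y) t)"
    using assms unfolding Diff_def by (elim conjE exE) blast
  show ?thesis
  proof (rule that[of c a0])
    fix t :: real and x y assume "0 < t"
    note bound = bounds[rule_format, OF this, of x y]
    then show "q t x y \<le> c / V \<mu> x (Finv F t) * exp (- a0 * F1 F (dist x y) t)" by blast
    assume "F (dist x y) \<le> t"
    then show "1 / (c * V \<mu> x (Finv F t)) \<le> q t x y" using bound by simp
  qed fact+
qed

theorem lemma4p2:
  fixes \<mu> :: "'a::{heine_borel, second_countable_topology} measure"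
    and d2 \<gamma>1 \<gamma>2 cF \<beta>1 \<beta>2 CL CU :: real
    and F \<psi> :: "real \<Rightarrow> real"
    and q :: "real \<Rightarrow> 'a \<Rightarrow> 'a \<Rightarrow> real"
  assumes sets_mu: "sets \<mu> = sets borel"
    and radon: "\<And>K. compact K \<Longrightarrow> emeasure \<mu> K < \<infinity>"
    and full_support: "\<And>x r. 0 < r \<Longrightarrow> emeasure \<mu> (ball x r) > 0"
    and infinite_mass: "emeasure \<mu> (space \<mu>) = \<infinity>"
    and vd: "VD \<mu> d2"
    and F_pos: "\<And>s. 0 < s \<Longrightarrow> 0 < F s"
    and F_strict: "strict_mono_on {0<..} F"
    and cF: "0 < cF"
    and gamma: "1 < \<gamma>1" "\<gamma>1 \<le> \<gamma>2"
    and F_L: "L_scale \<gamma>1 (1 / cF) F"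
    and F_U: "U_scale \<gamma>2 cF F"
    and diff: "Diff \<mu> F q"
    and beta: "0 < \<beta>1" "\<beta>1 \<le> \<beta>2"
    and CLU: "0 < CL" "0 < CU"
    and psi_pos: "\<And>s. 0 < s \<Longrightarrow> 0 < \<psi> s"
    and psi_mono: "mono_on {0<..} \<psi>"
    and psi_L: "L_scale \<beta>1 CL \<psi>"
    and psi_U: "U_scale \<beta>2 CU \<psi>"
    and psi_int: "stieltjes_int01 F \<psi> < \<infinity>"
  shows "\<exists>Cbar>1. \<forall>x y. x \<noteq> y \<longrightarrow>
           ennreal (inverse Cbar / (V \<mu> x (dist x y) * \<psi> (dist x y))) \<le> Jpsi q F \<psi> x y \<and>
           Jpsi q F \<psi> x y \<le> ennreal (Cbar / (V \<mu> x (dist x y) * \<psi> (dist x y)))"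
proof -
  have V_pos: "\<And>x r. 0 < r \<Longrightarrow> 0 < V \<mu> x r"
    using V_pos_of_full_support[OF sets_mu radon full_support] .
  obtain CV where doubling: "\<And>x r R. 0 < r \<Longrightarrow> r \<le> R \<Longrightarrow>
      V \<mu> x R \<le> CV * (R / r) powr max d2 0 * V \<mu> x r"
    using VD_imp_doubling_bound[OF vd V_pos] by blast
  obtain c a0 where "1 \<le> c" "0 < a0"
    and "\<And>t x y. 0 < t \<Longrightarrow> F (dist x y) \<le> t \<Longrightarrow>
      1 / (c * V \<mu> x (Finv F t)) \<le> q t x y"
    and "\<And>t x y. 0 < t \<Longrightarrow> q t x y \<le> c / V \<mu> x (Finv F t) * exp (- a0 * F1 F (dist x y) t)"
    using Diff_kernel_bounds[OF diff] by blast
  then interpret jump_kernel_setting F cF \<gamma>1 \<gamma>2 \<mu> CV "max d2 0" \<psi> \<beta>1 \<beta>2 CL CU q c a0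
    using F_pos F_strict cF gamma F_L F_U V_pos V_mono_of_locally_finite[OF sets_mu radon]
      doubling beta CLU psi_pos psi_L psi_U
    by unfold_locales auto
  show ?thesis by (rule Jpsi_comparable)
qed

end
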